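(* Let $\mathcal H_+=\mathcal H_-=\mathbb C^2$, $\mathcal H=\mathcal H_+\oplus\mathcal H_-$. Fix $b>0$ and $d_1,d_2\in i\mathbb R$, and put $B=\begin{pmatrix}b&0\\0&0\end{pmatrix}$, $D=\begin{pmatrix}d_1&0\\0&d_2\end{pmatrix}$. For $\alpha,\beta\in\mathbb C$ with $|\alpha|^2+|\beta|^2=1$ let $u=\begin{pmatrix}\alpha&0\\ \beta&0\end{pmatrix}$ and $$\mu=\begin{pmatrix}0&-Bu^*\\ uB&D\end{pmatrix}.$$ Then for all integers $n\ge1$ and $1\le k\le n+1$ there exist polynomials $p_1,p_2$ in two variables with real coefficients (depending only on $n,k,b,d_1,d_2$) such that for all such $\alpha,\beta$, $$i^{n+1}\big(\mu H^{n-1}_{k-1}(\mu)\big)_{--}\,u=\begin{pmatrix} i\,p_1(|\alpha|^2,|\beta|^2)\,\alpha & 0\\ i\,p_2(|\alpha|^2,|\beta|^2)\,\beta & 0\end{pmatrix}.$$ Equivalently, the equation $\frac{\partial}{\partial t^n_k}u=i^{n+1}(\mu H^{n-1}_{k-1}(\mu))_{--}u$ becomes $\frac{\partial}{\partial t^n_k}\alpha=i p_1(|\alpha|^2,|\beta|^2)\alpha$, $\frac{\partial}{\partial t^n_k}\beta=i p_2(|\alpha|^2,|\beta|^2)\beta$.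
   Context: $P_+$ and $P_-$ denote the orthogonal projectors of $\mathcal H$ onto $\mathcal H_+$ and $\mathcal H_-$; for an operator $X$ on $\mathcal H$, $X_{--}$ denotes the block $P_-XP_-$ regarded as an operator on $\mathcal H_-$. For integers $m\ge 0$ and $0\le l\le m+1$ and a matrix $\mu$ on $\mathcal H$, define $$H^m_l(\mu)=\sum_{\substack{i_0,\dots,i_m\in\{0,1\}\\ i_0+\dots+i_m=l}} P_+^{i_0}\mu P_+^{i_1}\mu\cdots\mu P_+^{i_m},$$ with $P_+^0=I$ the identity and $P_+^1=P_+$. *)

theory Defs
  imports Complex_Main "Jordan_Normal_Form.Matrix"
begin

text \<open>H = H_+ (+) H_-, with H_+ = H_- = C^2; H = C^4, coordinates 0,1 span H_+,
  coordinates 2,3 span H_-. Matrices are Jordan_Normal_Form matrices.\<close>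

definition Pplus :: "complex mat" where
  "Pplus = four_block_mat (1\<^sub>m 2) (0\<^sub>m 2 2) (0\<^sub>m 2 2) (0\<^sub>m 2 2)"

text \<open>P_+^0 = I, P_+^1 = P_+ (encoded by booleans False / True)\<close>
definition Ppow :: "bool \<Rightarrow> complex mat" where
  "Ppow i = (if i then Pplus else 1\<^sub>m 4)"

text \<open>P_+^{i_0} mu P_+^{i_1} mu ... mu P_+^{i_m} for the list [i_0,...,i_m]\<close>
fun Hword :: "complex mat \<Rightarrow> bool list \<Rightarrow> complex mat" where
  "Hword mu [] = 1\<^sub>m 4"
| "Hword mu [i] = Ppow i"
| "Hword mu (i # j # js) = Ppow i * mu * Hword mu (j # js)"

text \<open>H^m_l(mu) (4x4 matrix sum, taken entrywise): sum over (i_0,...,i_m) in {0,1}^(m+1) with i_0+...+i_m = l\<close>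
definition H :: "nat \<Rightarrow> nat \<Rightarrow> complex mat \<Rightarrow> complex mat" where
  "H m l mu = mat 4 4 (\<lambda>(r, c). \<Sum>is \<in> {is :: bool list. length is = m + 1 \<and> length (filter id is) = l}.
      Hword mu is $$ (r, c))"

text \<open>X_{--} = P_- X P_- regarded as an operator on H_-\<close>
definition blk_mm :: "complex mat \<Rightarrow> complex mat" where
  "blk_mm X = mat 2 2 (\<lambda>(i, j). X $$ (i + 2, j + 2))"

definition adj :: "complex mat \<Rightarrow> complex mat" where
  "adj A = transpose_mat (map_mat cnj A)"

definition Bm :: "real \<Rightarrow> complex mat" where
  "Bm b = mat_of_rows_list 2 [[complex_of_real b, 0], [0, 0]]"

definition Dm :: "complex \<Rightarrow> complex \<Rightarrow> complex mat" where
  "Dm d1 d2 = mat_of_rows_list 2 [[d1, 0], [0, d2]]"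

definition um :: "complex \<Rightarrow> complex \<Rightarrow> complex mat" where
  "um \<alpha> \<beta> = mat_of_rows_list 2 [[\<alpha>, 0], [\<beta>, 0]]"

definition mu :: "real \<Rightarrow> complex \<Rightarrow> complex \<Rightarrow> complex \<Rightarrow> complex \<Rightarrow> complex mat" where
  "mu b d1 d2 \<alpha> \<beta> = four_block_mat (0\<^sub>m 2 2) (- (Bm b * adj (um \<alpha> \<beta>)))
                                     (um \<alpha> \<beta> * Bm b) (Dm d1 d2)"

definition poly2 :: "nat \<Rightarrow> (nat \<Rightarrow> nat \<Rightarrow> real) \<Rightarrow> real \<Rightarrow> real \<Rightarrow> real" where
  "poly2 N c x y = (\<Sum>i\<le>N. \<Sum>j\<le>N. c i j * x ^ i * y ^ j)"

end

theory Submission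
  imports Defs "HOL-Computational_Algebra.Polynomial"
begin

(* Give the coordinates 0, 1, 2, 3 of H = H_+ (+) H_- the weights v = (1, 1, \<alpha>, \<beta>) and let
   e = (0, 0, 1, 1) be the indicator of H_-. Say that a matrix depending on \<alpha>, \<beta> has phase n if
     X_rc = w_rc * i^(n + e_r + e_c) * p_rc(|\<alpha>|^2, |\<beta>|^2)
   with real polynomials p_rc, where w_rr = 1 and w_rc = v_r * cnj v_c for r \<noteq> c.
   Since d1 and d2 are imaginary, \<mu> has phase 1, and I and P_+ have phase 0. Phases add under
   products: w_rm * w_mc is w_rc times a product of the real numbers |v_j|^2, and i^(2 e_m) = +-1.
   Hence \<mu> H^(n-1)_(k-1)(\<mu>) has phase n. In its lower right block applied to u the weights
   \<alpha> * cnj \<beta> and \<beta> * cnj \<alpha> are absorbed as |\<beta>|^2 \<alpha> and |\<alpha>|^2 \<beta>. *)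

definition poly_xy :: "real poly poly \<Rightarrow> real \<Rightarrow> real \<Rightarrow> real" where
  "poly_xy p x y = poly (poly p [:x:]) y"

lemma poly_xy_add [simp]: "poly_xy (p + q) x y = poly_xy p x y + poly_xy q x y"
  by (simp add: poly_xy_def)

lemma poly_xy_mult [simp]: "poly_xy (p * q) x y = poly_xy p x y * poly_xy q x y"
  by (simp add: poly_xy_def)

lemma poly_xy_0 [simp]: "poly_xy 0 x y = 0"
  by (simp add: poly_xy_def)

lemma poly_xy_1 [simp]: "poly_xy 1 x y = 1"
  by (simp add: poly_xy_def)

lemma poly_xy_pCons [simp]: "poly_xy (pCons a p) x y = poly a y + x * poly_xy p x y"
  by (simp add: poly_xy_def)

lemma poly_xy_smult [simp]: "poly_xy (smult a p) x y = poly a y * poly_xy p x y"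
  by (simp add: poly_xy_def)

lemma poly_xy_sum [simp]: "poly_xy (\<Sum>i\<in>S. f i) x y = (\<Sum>i\<in>S. poly_xy (f i) x y)"
  by (induction S rule: infinite_finite_induct) auto

lemma poly_eq_sum_upto:
  fixes q :: "'a::comm_semiring_1 poly"
  assumes "degree q \<le> N"
  shows "poly q z = (\<Sum>i\<le>N. coeff q i * z ^ i)"
  unfolding poly_altdef
  by (rule sum.mono_neutral_left) (use assms in \<open>auto simp: coeff_eq_0\<close>)

lemma poly_xy_eq_poly2:
  assumes "degree p \<le> N" and "\<And>i. degree (coeff p i) \<le> N"
  shows "poly_xy p x y = poly2 N (\<lambda>i j. coeff (coeff p i) j) x y"
proof -
  have "poly_xy p x y = (\<Sum>i\<le>N. poly (coeff p i) y * x ^ i)"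
    unfolding poly_xy_def poly_eq_sum_upto[OF assms(1)] by (simp add: poly_sum poly_power)
  also have "\<dots> = (\<Sum>i\<le>N. (\<Sum>j\<le>N. coeff (coeff p i) j * y ^ j) * x ^ i)"
    using poly_eq_sum_upto[OF assms(2)] by simp
  also have "\<dots> = poly2 N (\<lambda>i j. coeff (coeff p i) j) x y"
    unfolding poly2_def by (simp add: sum_distrib_left sum_distrib_right mult_ac)
  finally show ?thesis .
qed

lemma poly_poly_degrees_bounded: "\<exists>N. degree p \<le> N \<and> (\<forall>i. degree (coeff p i) \<le> N)"
proof (intro exI conjI allI)
  let ?N = "degree p + (\<Sum>i\<le>degree p. degree (coeff p i))"
  show "degree p \<le> ?N" by simp
  fix i
  show "degree (coeff p i) \<le> ?N"
  proof (cases "i \<le> degree p")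
    case True
    then have "degree (coeff p i) \<le> (\<Sum>i\<le>degree p. degree (coeff p i))"
      by (intro member_le_sum) auto
    then show ?thesis by simp
  qed (simp add: coeff_eq_0)
qed

definition ind_minus :: "nat \<Rightarrow> nat" where
  "ind_minus r = (if 2 \<le> r then 1 else 0)"

definition coord_weight :: "complex \<Rightarrow> complex \<Rightarrow> nat \<Rightarrow> complex" where
  "coord_weight \<alpha> \<beta> r = (if r = 2 then \<alpha> else if r = 3 then \<beta> else 1)"

definition entry_weight :: "complex \<Rightarrow> complex \<Rightarrow> nat \<Rightarrow> nat \<Rightarrow> complex" where
  "entry_weight \<alpha> \<beta> r c = (if r = c then 1 else coord_weight \<alpha> \<beta> r * cnj (coord_weight \<alpha> \<beta> c))"

abbreviation poly_at_norms :: "real poly poly \<Rightarrow> complex \<Rightarrow> complex \<Rightarrow> complex" where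
  "poly_at_norms p \<alpha> \<beta> \<equiv> complex_of_real (poly_xy p ((cmod \<alpha>)\<^sup>2) ((cmod \<beta>)\<^sup>2))"

definition norm_sq_poly :: "nat \<Rightarrow> real poly poly" where
  "norm_sq_poly r = (if r = 2 then [:0, 1:] else if r = 3 then [:[:0, 1:]:] else 1)"

definition weight_product_poly :: "nat \<Rightarrow> nat \<Rightarrow> nat \<Rightarrow> real poly poly" where
  "weight_product_poly r m c =
     (if r = m \<or> m = c then 1 else if r = c then norm_sq_poly r * norm_sq_poly m else norm_sq_poly m)"

lemma mult_cnj_eq_norm_sq: "z * cnj z = (complex_of_real (cmod z))\<^sup>2"
  using complex_norm_square[of z] by simp

lemma coord_weight_mult_cnj:
  "coord_weight \<alpha> \<beta> m * cnj (coord_weight \<alpha> \<beta> m) = poly_at_norms (norm_sq_poly m) \<alpha> \<beta>"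
  by (simp add: coord_weight_def norm_sq_poly_def mult_cnj_eq_norm_sq)

lemma entry_weight_mult:
  "entry_weight \<alpha> \<beta> r m * entry_weight \<alpha> \<beta> m c
     = entry_weight \<alpha> \<beta> r c * poly_at_norms (weight_product_poly r m c) \<alpha> \<beta>"
  unfolding entry_weight_def weight_product_poly_def
  by (auto simp: coord_weight_mult_cnj[symmetric] mult_ac)

lemma i_power_ind_minus_mult:
  "\<i> ^ (n + ind_minus r + ind_minus m) * \<i> ^ (k + ind_minus m + ind_minus c)
     = \<i> ^ (n + k + ind_minus r + ind_minus c) * (- 1) ^ ind_minus m"
proof -
  have "\<i> ^ (n + ind_minus r + ind_minus m) * \<i> ^ (k + ind_minus m + ind_minus c)
      = \<i> ^ ((n + k + ind_minus r + ind_minus c) + 2 * ind_minus m)"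
    unfolding power_add[symmetric] by (rule arg_cong[where f = "power \<i>"]) simp
  also have "\<dots> = \<i> ^ (n + k + ind_minus r + ind_minus c) * (\<i>\<^sup>2) ^ ind_minus m"
    by (simp only: power_add power_mult)
  finally show ?thesis by simp
qed

abbreviation phase_entry ::
    "nat \<Rightarrow> (nat \<Rightarrow> nat \<Rightarrow> real poly poly) \<Rightarrow> complex \<Rightarrow> complex \<Rightarrow> nat \<Rightarrow> nat \<Rightarrow> complex" where
  "phase_entry n q \<alpha> \<beta> r c \<equiv>
     entry_weight \<alpha> \<beta> r c * \<i> ^ (n + ind_minus r + ind_minus c) * poly_at_norms (q r c) \<alpha> \<beta>"

definition phase_form :: "nat \<Rightarrow> (complex \<Rightarrow> complex \<Rightarrow> complex mat) \<Rightarrow> bool" where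
  "phase_form n F \<longleftrightarrow> (\<exists>q. \<forall>\<alpha> \<beta>. F \<alpha> \<beta> \<in> carrier_mat 4 4 \<and> (\<forall>r<4. \<forall>c<4.
     F \<alpha> \<beta> $$ (r, c) = phase_entry n q \<alpha> \<beta> r c))"

lemma phase_formI:
  assumes "\<And>\<alpha> \<beta>. F \<alpha> \<beta> \<in> carrier_mat 4 4"
    and "\<And>\<alpha> \<beta> r c. r < 4 \<Longrightarrow> c < 4 \<Longrightarrow>
      F \<alpha> \<beta> $$ (r, c) = phase_entry n q \<alpha> \<beta> r c"
  shows "phase_form n F"
  unfolding phase_form_def using assms by blast

lemma phase_formE:
  assumes "phase_form n F"
  obtains q where "\<And>\<alpha> \<beta>. F \<alpha> \<beta> \<in> carrier_mat 4 4"
    and "\<And>\<alpha> \<beta> r c. r < 4 \<Longrightarrow> c < 4 \<Longrightarrow>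
      F \<alpha> \<beta> $$ (r, c) = phase_entry n q \<alpha> \<beta> r c"
  using assms unfolding phase_form_def by blast

lemma phase_form_mult:
  assumes "phase_form n F" and "phase_form k G"
  shows "phase_form (n + k) (\<lambda>\<alpha> \<beta>. F \<alpha> \<beta> * G \<alpha> \<beta>)"
proof -
  obtain p where F: "\<And>\<alpha> \<beta>. F \<alpha> \<beta> \<in> carrier_mat 4 4"
    and Fp: "\<And>\<alpha> \<beta> r c. r < 4 \<Longrightarrow> c < 4 \<Longrightarrow>
      F \<alpha> \<beta> $$ (r, c) = phase_entry n p \<alpha> \<beta> r c"
    using assms(1) by (rule phase_formE) (rule that)
  obtain q where G: "\<And>\<alpha> \<beta>. G \<alpha> \<beta> \<in> carrier_mat 4 4"
    and Gq: "\<And>\<alpha> \<beta> r c. r < 4 \<Longrightarrow> c < 4 \<Longrightarrow>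
      G \<alpha> \<beta> $$ (r, c) = phase_entry k q \<alpha> \<beta> r c"
    using assms(2) by (rule phase_formE) (rule that)
  define s where
    "s r c = (\<Sum>m<4. smult [:(- 1) ^ ind_minus m:] (weight_product_poly r m c * p r m * q m c))" for r c
  show ?thesis
  proof (rule phase_formI[where q = s], goal_cases)
    case (1 \<alpha> \<beta>)
    show ?case using F G by (rule mult_carrier_mat)
  next
    case (2 \<alpha> \<beta> r c)
    have "(F \<alpha> \<beta> * G \<alpha> \<beta>) $$ (r, c) = (\<Sum>m<4. F \<alpha> \<beta> $$ (r, m) * G \<alpha> \<beta> $$ (m, c))"
      using F[of \<alpha> \<beta>] G[of \<alpha> \<beta>] 2 by (simp add: scalar_prod_def atLeast0LessThan)
    also have "\<dots> = (\<Sum>m<4. entry_weight \<alpha> \<beta> r c * \<i> ^ (n + k + ind_minus r + ind_minus c) *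
        poly_at_norms (smult [:(- 1) ^ ind_minus m:] (weight_product_poly r m c * p r m * q m c)) \<alpha> \<beta>)"
    proof (rule sum.cong[OF refl], goal_cases)
      case (1 m)
      then have "F \<alpha> \<beta> $$ (r, m) * G \<alpha> \<beta> $$ (m, c)
          = (entry_weight \<alpha> \<beta> r m * entry_weight \<alpha> \<beta> m c)
            * (\<i> ^ (n + ind_minus r + ind_minus m) * \<i> ^ (k + ind_minus m + ind_minus c))
            * (poly_at_norms (p r m) \<alpha> \<beta> * poly_at_norms (q m c) \<alpha> \<beta>)"
        using 2 by (simp add: Fp Gq mult_ac)
      also have "\<dots> = entry_weight \<alpha> \<beta> r c * \<i> ^ (n + k + ind_minus r + ind_minus c) *
          poly_at_norms (smult [:(- 1) ^ ind_minus m:] (weight_product_poly r m c * p r m * q m c)) \<alpha> \<beta>"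
        unfolding entry_weight_mult i_power_ind_minus_mult by (simp add: mult_ac)
      finally show ?case .
    qed
    also have "\<dots> = phase_entry (n + k) s \<alpha> \<beta> r c"
      unfolding s_def by (simp add: sum_distrib_left)
    finally show ?case .
  qed
qed

lemma phase_form_sum:
  assumes "\<And>s. s \<in> S \<Longrightarrow> phase_form n (F s)"
  shows "phase_form n (\<lambda>\<alpha> \<beta>. mat 4 4 (\<lambda>(r, c). \<Sum>s\<in>S. F s \<alpha> \<beta> $$ (r, c)))"
proof -
  have "\<forall>s\<in>S. \<exists>q. \<forall>\<alpha> \<beta> r c. r < 4 \<longrightarrow> c < 4 \<longrightarrow>
      F s \<alpha> \<beta> $$ (r, c) = phase_entry n q \<alpha> \<beta> r c"
    using assms unfolding phase_form_def by blast
  then obtain Q where Q: "\<And>s \<alpha> \<beta> r c. s \<in> S \<Longrightarrow> r < 4 \<Longrightarrow> c < 4 \<Longrightarrow>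
      F s \<alpha> \<beta> $$ (r, c) = phase_entry n (Q s) \<alpha> \<beta> r c"
    by metis
  show ?thesis
  proof (rule phase_formI[where q = "\<lambda>r c. \<Sum>s\<in>S. Q s r c"], goal_cases)
    case (2 \<alpha> \<beta> r c)
    then show ?case by (simp add: Q sum_distrib_left cong: sum.cong)
  qed simp
qed

lemma phase_form_real_diagonal:
  "phase_form 0 (\<lambda>\<alpha> \<beta>. mat 4 4 (\<lambda>(r, c). if r = c then complex_of_real (f r) else 0))"
proof (rule phase_formI[where q = "\<lambda>r c. if r = c then [:[:(- 1) ^ ind_minus r * f r:]:] else 0"],
    goal_cases)
  case (2 \<alpha> \<beta> r c)
  have "\<i> ^ (ind_minus r + ind_minus r) * (- 1) ^ ind_minus r = 1"
    by (simp add: ind_minus_def)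
  then show ?case using 2 by (simp add: entry_weight_def mult_ac)
qed simp

lemma phase_form_Ppow: "phase_form 0 (\<lambda>\<alpha> \<beta>. Ppow i)"
proof -
  have "Ppow i = mat 4 4 (\<lambda>(r, c). if r = c then complex_of_real (if i \<and> 2 \<le> r then 0 else 1) else 0)"
    by (rule eq_matI) (auto simp: Ppow_def Pplus_def)
  then show ?thesis
    by (simp only: phase_form_real_diagonal)
qed

lemma mu_eq_mat:
  "mu b d1 d2 \<alpha> \<beta> = mat 4 4 (\<lambda>(r, c).
     if r = 0 \<and> c = 2 then - b * cnj \<alpha> else if r = 0 \<and> c = 3 then - b * cnj \<beta>
     else if r = 2 \<and> c = 0 then b * \<alpha> else if r = 3 \<and> c = 0 then b * \<beta>
     else if r = 2 \<and> c = 2 then d1 else if r = 3 \<and> c = 3 then d2 else 0)"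
proof (rule eq_matI, goal_cases)
  case (1 i j)
  then have "i \<in> {0, 1, 2, 3}" "j \<in> {0, 1, 2, 3}" by auto
  then show ?case
    by (auto simp: mu_def Bm_def Dm_def um_def adj_def mat_of_rows_list_def scalar_prod_def numeral_2_eq_2)
qed (simp_all add: mu_def Bm_def Dm_def um_def adj_def mat_of_rows_list_def)

lemma phase_form_mu:
  assumes "Re d1 = 0" and "Re d2 = 0"
  shows "phase_form 1 (mu b d1 d2)"
proof -
  define a1 a2 where "a1 = Im d1" and "a2 = Im d2"
  have d: "d1 = \<i> * a1" "d2 = \<i> * a2"
    using assms by (simp_all add: a1_def a2_def complex_eq_iff)
  define q :: "nat \<Rightarrow> nat \<Rightarrow> real poly poly" where
    "q r c = (if r = 0 \<and> (c = 2 \<or> c = 3) then [:[:b:]:]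
       else if (r = 2 \<or> r = 3) \<and> c = 0 then [:[:- b:]:]
       else if r = 2 \<and> c = 2 then [:[:- a1:]:]
       else if r = 3 \<and> c = 3 then [:[:- a2:]:] else 0)" for r c
  show ?thesis
  proof (rule phase_formI[where q = q], goal_cases)
    case (2 \<alpha> \<beta> r c)
    then have "r = 0 \<or> r = 1 \<or> r = 2 \<or> r = 3" "c = 0 \<or> c = 1 \<or> c = 2 \<or> c = 3" by auto
    then show ?case
      by (elim disjE) (simp_all add: mu_eq_mat d q_def entry_weight_def coord_weight_def ind_minus_def)
  qed (simp add: mu_eq_mat)
qed

lemma phase_form_Hword:
  assumes "Re d1 = 0" and "Re d2 = 0" and "is \<noteq> []"
  shows "phase_form (length is - 1) (\<lambda>\<alpha> \<beta>. Hword (mu b d1 d2 \<alpha> \<beta>) is)"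
  using assms(3)
proof (induction "is" rule: induct_list012)
  case (2 i)
  then show ?case using phase_form_Ppow[of i] by simp
next
  case (3 i j js)
  have "phase_form (0 + 1 + (length (j # js) - 1))
      (\<lambda>\<alpha> \<beta>. Ppow i * mu b d1 d2 \<alpha> \<beta> * Hword (mu b d1 d2 \<alpha> \<beta>) (j # js))"
    using 3 by (intro phase_form_mult phase_form_Ppow phase_form_mu assms(1,2)) simp
  then show ?case by simp
qed simp

lemma phase_form_H:
  assumes "Re d1 = 0" and "Re d2 = 0"
  shows "phase_form m (\<lambda>\<alpha> \<beta>. H m l (mu b d1 d2 \<alpha> \<beta>))"
  unfolding H_def
proof (rule phase_form_sum)
  fix "is" assume "is \<in> {is :: bool list. length is = m + 1 \<and> length (filter id is) = l}"
  then have "is \<noteq> []" and "length is - 1 = m" by auto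
  then show "phase_form m (\<lambda>\<alpha> \<beta>. Hword (mu b d1 d2 \<alpha> \<beta>) is)"
    using phase_form_Hword[OF assms] by metis
qed

lemma smult_blk_mm_mult_um:
  "a \<cdot>\<^sub>m blk_mm X * um \<alpha> \<beta> = mat_of_rows_list 2
     [[a * (X $$ (2, 2) * \<alpha> + X $$ (2, 3) * \<beta>), 0],
      [a * (X $$ (3, 2) * \<alpha> + X $$ (3, 3) * \<beta>), 0]]"
proof (rule eq_matI, goal_cases)
  case (1 i j)
  then have "i \<in> {0, 1}" "j \<in> {0, 1}" by (auto simp: mat_of_rows_list_def)
  then show ?case
    by (auto simp: blk_mm_def um_def mat_of_rows_list_def scalar_prod_def numeral_2_eq_2 numeral_3_eq_3
        distrib_left mult.assoc)
qed (simp_all add: blk_mm_def um_def mat_of_rows_list_def)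

lemma i_power_Suc_mult_i_power_Suc_Suc: "\<i> ^ (n + 1) * \<i> ^ (n + 2) = \<i> * (- 1) ^ (n + 1)"
proof -
  have "\<i> ^ (n + 1) * \<i> ^ (n + 2) = \<i> ^ (1 + 2 * (n + 1))"
    unfolding power_add[symmetric] by (rule arg_cong[where f = "power \<i>"]) simp
  also have "\<dots> = \<i> * (\<i>\<^sup>2) ^ (n + 1)"
    by (simp only: power_add power_mult power_one_right)
  finally show ?thesis by simp
qed

lemma phase_form_minus_block_mult_um:
  assumes "phase_form n F"
  obtains p1 p2 where "\<And>\<alpha> \<beta>. \<i> ^ (n + 1) \<cdot>\<^sub>m blk_mm (F \<alpha> \<beta>) * um \<alpha> \<beta>
      = mat_of_rows_list 2 [[\<i> * poly_at_norms p1 \<alpha> \<beta> * \<alpha>, 0], [\<i> * poly_at_norms p2 \<alpha> \<beta> * \<beta>, 0]]"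
proof -
  obtain q where Fq: "\<And>\<alpha> \<beta> r c. r < 4 \<Longrightarrow> c < 4 \<Longrightarrow>
      F \<alpha> \<beta> $$ (r, c) = phase_entry n q \<alpha> \<beta> r c"
    using assms by (rule phase_formE) (rule that)
  define p1 where "p1 = smult [:(- 1) ^ (n + 1):] (q 2 2 + [:[:0, 1:]:] * q 2 3)"
  define p2 where "p2 = smult [:(- 1) ^ (n + 1):] ([:0, 1:] * q 3 2 + q 3 3)"
  have upper: "\<i> ^ (n + 1) * (F \<alpha> \<beta> $$ (2, 2) * \<alpha> + F \<alpha> \<beta> $$ (2, 3) * \<beta>)
      = \<i> * poly_at_norms p1 \<alpha> \<beta> * \<alpha>" for \<alpha> \<beta>
  proof -
    have "\<i> ^ (n + 1) * (F \<alpha> \<beta> $$ (2, 2) * \<alpha> + F \<alpha> \<beta> $$ (2, 3) * \<beta>)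
        = (\<i> ^ (n + 1) * \<i> ^ (n + 2))
          * (poly_at_norms (q 2 2) \<alpha> \<beta> + (\<beta> * cnj \<beta>) * poly_at_norms (q 2 3) \<alpha> \<beta>) * \<alpha>"
      by (simp add: Fq entry_weight_def coord_weight_def ind_minus_def algebra_simps)
    also have "\<dots> = \<i> * poly_at_norms p1 \<alpha> \<beta> * \<alpha>"
      unfolding i_power_Suc_mult_i_power_Suc_Suc
      by (simp add: mult_cnj_eq_norm_sq p1_def algebra_simps)
    finally show ?thesis .
  qed
  have lower: "\<i> ^ (n + 1) * (F \<alpha> \<beta> $$ (3, 2) * \<alpha> + F \<alpha> \<beta> $$ (3, 3) * \<beta>)
      = \<i> * poly_at_norms p2 \<alpha> \<beta> * \<beta>" for \<alpha> \<beta>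
  proof -
    have "\<i> ^ (n + 1) * (F \<alpha> \<beta> $$ (3, 2) * \<alpha> + F \<alpha> \<beta> $$ (3, 3) * \<beta>)
        = (\<i> ^ (n + 1) * \<i> ^ (n + 2))
          * ((\<alpha> * cnj \<alpha>) * poly_at_norms (q 3 2) \<alpha> \<beta> + poly_at_norms (q 3 3) \<alpha> \<beta>) * \<beta>"
      by (simp add: Fq entry_weight_def coord_weight_def ind_minus_def algebra_simps)
    also have "\<dots> = \<i> * poly_at_norms p2 \<alpha> \<beta> * \<beta>"
      unfolding i_power_Suc_mult_i_power_Suc_Suc
      by (simp add: mult_cnj_eq_norm_sq p2_def algebra_simps)
    finally show ?thesis .
  qed
  show ?thesis
    by (rule that[of p1 p2]) (simp only: smult_blk_mm_mult_um upper lower)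
qed

lemma poly_xy_pair_eq_poly2:
  "\<exists>N c1 c2. \<forall>x y. poly_xy p1 x y = poly2 N c1 x y \<and> poly_xy p2 x y = poly2 N c2 x y"
proof -
  obtain N1 where N1: "degree p1 \<le> N1" "\<And>i. degree (coeff p1 i) \<le> N1"
    using poly_poly_degrees_bounded by blast
  obtain N2 where N2: "degree p2 \<le> N2" "\<And>i. degree (coeff p2 i) \<le> N2"
    using poly_poly_degrees_bounded by blast
  have "poly_xy p1 x y = poly2 (max N1 N2) (\<lambda>i j. coeff (coeff p1 i) j) x y"
    and "poly_xy p2 x y = poly2 (max N1 N2) (\<lambda>i j. coeff (coeff p2 i) j) x y" for x y
    using N1 N2 by (auto intro!: poly_xy_eq_poly2 le_max_iff_disj[THEN iffD2])
  then show ?thesis by blast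
qed

theorem proposition3p1:
  fixes b :: real and d1 d2 :: complex and n k :: nat
  assumes "b > 0" and "Re d1 = 0" and "Re d2 = 0"
    and "1 \<le> n" and "1 \<le> k" and "k \<le> n + 1"
  shows "\<exists>N c1 c2. \<forall>\<alpha> \<beta> :: complex. (cmod \<alpha>)\<^sup>2 + (cmod \<beta>)\<^sup>2 = 1 \<longrightarrow>
      (\<i> ^ (n + 1)) \<cdot>\<^sub>m blk_mm (mu b d1 d2 \<alpha> \<beta> * H (n - 1) (k - 1) (mu b d1 d2 \<alpha> \<beta>))
        * um \<alpha> \<beta>
      = mat_of_rows_list 2
          [[\<i> * complex_of_real (poly2 N c1 ((cmod \<alpha>)\<^sup>2) ((cmod \<beta>)\<^sup>2)) * \<alpha>, 0],
           [\<i> * complex_of_real (poly2 N c2 ((cmod \<alpha>)\<^sup>2) ((cmod \<beta>)\<^sup>2)) * \<beta>, 0]]"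
proof -
  have "phase_form (1 + (n - 1)) (\<lambda>\<alpha> \<beta>. mu b d1 d2 \<alpha> \<beta> * H (n - 1) (k - 1) (mu b d1 d2 \<alpha> \<beta>))"
    using assms(2,3) by (intro phase_form_mult phase_form_mu phase_form_H)
  then have "phase_form n (\<lambda>\<alpha> \<beta>. mu b d1 d2 \<alpha> \<beta> * H (n - 1) (k - 1) (mu b d1 d2 \<alpha> \<beta>))"
    using \<open>1 \<le> n\<close> by simp
  then obtain p1 p2 where p: "\<And>\<alpha> \<beta>.
      \<i> ^ (n + 1) \<cdot>\<^sub>m blk_mm (mu b d1 d2 \<alpha> \<beta> * H (n - 1) (k - 1) (mu b d1 d2 \<alpha> \<beta>)) * um \<alpha> \<beta>
      = mat_of_rows_list 2 [[\<i> * poly_at_norms p1 \<alpha> \<beta> * \<alpha>, 0], [\<i> * poly_at_norms p2 \<alpha> \<beta> * \<beta>, 0]]"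
    by (rule phase_form_minus_block_mult_um) (rule that)
  obtain N c1 c2 where "\<And>x y. poly_xy p1 x y = poly2 N c1 x y \<and> poly_xy p2 x y = poly2 N c2 x y"
    using poly_xy_pair_eq_poly2 by blast
  then show ?thesis
    using p by auto
qed

end
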